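(* Let $G:\mathcal{C}\to\mathcal{D}$ and $H:\mathcal{D}\to\mathcal{E}$ be functors. (1) If $G$ and $H$ are naturally full, then $H\circ G$ is naturally full. (2) If $H\circ G$ is naturally full and $H$ is faithful, then $G$ is naturally full.
   Context: For a functor $F:\mathcal{A}\to\mathcal{B}$, let $\mathcal{F}:\mathrm{Hom}_{\mathcal{A}}(\bullet,\bullet)\to\mathrm{Hom}_{\mathcal{B}}(F(\bullet),F(\bullet))$ be the natural transformation (of functors $\mathcal{A}^{op}\times\mathcal{A}\to\mathbf{Sets}$) given by $\mathcal{F}_{A,A'}(f)=F(f)$. The functor $F$ is called naturally full if $\mathcal{F}$ has a right inverse, i.e. there is a natural transformation $\mathcal{P}:\mathrm{Hom}_{\mathcal{B}}(F(\bullet),F(\bullet))\to\mathrm{Hom}_{\mathcal{A}}(\bullet,\bullet)$ with $\mathcal{F}\circ\mathcal{P}=\mathrm{id}$. Explicitly: for all $A,A'$ and $u:F(A)\to F(A')$ one has $F(\mathcal{P}_{A,A'}(u))=u$, and naturality means $\mathcal{P}_{X,T}(F(h)\circ g\circ F(f))=h\circ\mathcal{P}_{Y,Z}(g)\circ f$ for all $f:X\to Y$, $h:Z\to T$ in $\mathcal{A}$ and $g:F(Y)\to F(Z)$ in $\mathcal{B}$. *)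

theory Defs
  imports Main
begin

text \<open>Categories in arrow-centric style: objects, arrows, domain, codomain,
composition (cmp C g f means g after f) and identities.\<close>

record ('o, 'm) category =
  Obj :: "'o set"
  Arr :: "'m set"
  Dom :: "'m \<Rightarrow> 'o"
  Cod :: "'m \<Rightarrow> 'o"
  cmp :: "'m \<Rightarrow> 'm \<Rightarrow> 'm"
  ident :: "'o \<Rightarrow> 'm"

definition Hom :: "('o, 'm) category \<Rightarrow> 'o \<Rightarrow> 'o \<Rightarrow> 'm set" where
  "Hom C A B = {f \<in> Arr C. Dom C f = A \<and> Cod C f = B}"

definition is_category :: "('o, 'm) category \<Rightarrow> bool" where
  "is_category C \<longleftrightarrow>
     (\<forall>f \<in> Arr C. Dom C f \<in> Obj C \<and> Cod C f \<in> Obj C) \<and>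
     (\<forall>A \<in> Obj C. ident C A \<in> Hom C A A) \<and>
     (\<forall>A \<in> Obj C. \<forall>B \<in> Obj C. \<forall>D \<in> Obj C. \<forall>f \<in> Hom C A B. \<forall>g \<in> Hom C B D.
        cmp C g f \<in> Hom C A D) \<and>
     (\<forall>A \<in> Obj C. \<forall>B \<in> Obj C. \<forall>f \<in> Hom C A B.
        cmp C (ident C B) f = f \<and> cmp C f (ident C A) = f) \<and>
     (\<forall>A \<in> Obj C. \<forall>B \<in> Obj C. \<forall>D \<in> Obj C. \<forall>E \<in> Obj C.
        \<forall>f \<in> Hom C A B. \<forall>g \<in> Hom C B D. \<forall>h \<in> Hom C D E.
        cmp C h (cmp C g f) = cmp C (cmp C h g) f)"

definition is_functor ::
  "('o1, 'm1) category \<Rightarrow> ('o2, 'm2) category \<Rightarrow> ('o1 \<Rightarrow> 'o2) \<Rightarrow> ('m1 \<Rightarrow> 'm2) \<Rightarrow> bool" where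
  "is_functor C D Fo Fm \<longleftrightarrow>
     (\<forall>A \<in> Obj C. Fo A \<in> Obj D) \<and>
     (\<forall>A \<in> Obj C. \<forall>B \<in> Obj C. \<forall>f \<in> Hom C A B. Fm f \<in> Hom D (Fo A) (Fo B)) \<and>
     (\<forall>A \<in> Obj C. Fm (ident C A) = ident D (Fo A)) \<and>
     (\<forall>A \<in> Obj C. \<forall>B \<in> Obj C. \<forall>E \<in> Obj C. \<forall>f \<in> Hom C A B. \<forall>g \<in> Hom C B E.
        Fm (cmp C g f) = cmp D (Fm g) (Fm f))"

definition faithful ::
  "('o1, 'm1) category \<Rightarrow> ('o2, 'm2) category \<Rightarrow> ('o1 \<Rightarrow> 'o2) \<Rightarrow> ('m1 \<Rightarrow> 'm2) \<Rightarrow> bool" where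
  "faithful C D Fo Fm \<longleftrightarrow>
     (\<forall>A \<in> Obj C. \<forall>B \<in> Obj C. inj_on Fm (Hom C A B))"

text \<open>Naturally full: the natural transformation Hom_C(-,-) to Hom_D(F-,F-) given by F
has a right inverse P, i.e. a natural family of maps P A A' from Hom_D(F A, F A')
to Hom_C(A, A') with F (P A A' u) = u.\<close>

definition naturally_full ::
  "('o1, 'm1) category \<Rightarrow> ('o2, 'm2) category \<Rightarrow> ('o1 \<Rightarrow> 'o2) \<Rightarrow> ('m1 \<Rightarrow> 'm2) \<Rightarrow> bool" where
  "naturally_full C D Fo Fm \<longleftrightarrow>
     (\<exists>P :: 'o1 \<Rightarrow> 'o1 \<Rightarrow> 'm2 \<Rightarrow> 'm1.
        (\<forall>A \<in> Obj C. \<forall>A' \<in> Obj C. \<forall>u \<in> Hom D (Fo A) (Fo A').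
            P A A' u \<in> Hom C A A' \<and> Fm (P A A' u) = u) \<and>
        (\<forall>X \<in> Obj C. \<forall>Y \<in> Obj C. \<forall>Z \<in> Obj C. \<forall>T \<in> Obj C.
           \<forall>f \<in> Hom C X Y. \<forall>h \<in> Hom C Z T. \<forall>g \<in> Hom D (Fo Y) (Fo Z).
             P X T (cmp D (Fm h) (cmp D g (Fm f))) = cmp C h (cmp C (P Y Z g) f)))"

end

theory Submission
  imports Defs
begin

text \<open>Both parts are proved by exhibiting the right inverse explicitly: for \<open>H \<circ> G\<close> one takes
  \<open>P\<^sub>G \<circ> P\<^sub>H\<close>, and if \<open>H\<close> is faithful a right inverse \<open>P\<close> of \<open>H \<circ> G\<close> gives the right inverse
  \<open>P \<circ> H\<close> of \<open>G\<close>: the equation \<open>H (G (P (H u))) = H u\<close> forces \<open>G (P (H u)) = u\<close>, and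
  naturality of \<open>P \<circ> H\<close> is naturality of \<open>P\<close> after rewriting with functoriality of \<open>H\<close>.\<close>

lemma category_cmp_Hom:
  assumes "is_category C" "A \<in> Obj C" "B \<in> Obj C" "B' \<in> Obj C"
    and "f \<in> Hom C A B" "g \<in> Hom C B B'"
  shows "cmp C g f \<in> Hom C A B'"
  using assms unfolding is_category_def by blast

lemma functor_Obj: "is_functor C D Fo Fm \<Longrightarrow> A \<in> Obj C \<Longrightarrow> Fo A \<in> Obj D"
  unfolding is_functor_def by blast

lemma functor_Hom:
  "is_functor C D Fo Fm \<Longrightarrow> A \<in> Obj C \<Longrightarrow> B \<in> Obj C \<Longrightarrow> f \<in> Hom C A B
    \<Longrightarrow> Fm f \<in> Hom D (Fo A) (Fo B)"
  unfolding is_functor_def by blast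

lemma functor_cmp:
  "is_functor C D Fo Fm \<Longrightarrow> A \<in> Obj C \<Longrightarrow> B \<in> Obj C \<Longrightarrow> B' \<in> Obj C
    \<Longrightarrow> f \<in> Hom C A B \<Longrightarrow> g \<in> Hom C B B' \<Longrightarrow> Fm (cmp C g f) = cmp D (Fm g) (Fm f)"
  unfolding is_functor_def by blast

definition natural_section ::
  "('o1, 'm1) category \<Rightarrow> ('o2, 'm2) category \<Rightarrow> ('o1 \<Rightarrow> 'o2) \<Rightarrow> ('m1 \<Rightarrow> 'm2)
    \<Rightarrow> ('o1 \<Rightarrow> 'o1 \<Rightarrow> 'm2 \<Rightarrow> 'm1) \<Rightarrow> bool" where
  "natural_section C D Fo Fm P \<longleftrightarrow>
     (\<forall>A \<in> Obj C. \<forall>A' \<in> Obj C. \<forall>u \<in> Hom D (Fo A) (Fo A').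
        P A A' u \<in> Hom C A A' \<and> Fm (P A A' u) = u) \<and>
     (\<forall>X \<in> Obj C. \<forall>Y \<in> Obj C. \<forall>Z \<in> Obj C. \<forall>T \<in> Obj C.
        \<forall>f \<in> Hom C X Y. \<forall>h \<in> Hom C Z T. \<forall>g \<in> Hom D (Fo Y) (Fo Z).
          P X T (cmp D (Fm h) (cmp D g (Fm f))) = cmp C h (cmp C (P Y Z g) f))"

lemma naturally_full_iff_natural_section:
  "naturally_full C D Fo Fm \<longleftrightarrow> (\<exists>P. natural_section C D Fo Fm P)"
  unfolding naturally_full_def natural_section_def ..

lemma natural_sectionI:
  assumes "\<And>A A' u. A \<in> Obj C \<Longrightarrow> A' \<in> Obj C \<Longrightarrow> u \<in> Hom D (Fo A) (Fo A')
      \<Longrightarrow> P A A' u \<in> Hom C A A'"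
    and "\<And>A A' u. A \<in> Obj C \<Longrightarrow> A' \<in> Obj C \<Longrightarrow> u \<in> Hom D (Fo A) (Fo A')
      \<Longrightarrow> Fm (P A A' u) = u"
    and "\<And>X Y Z T f h g. X \<in> Obj C \<Longrightarrow> Y \<in> Obj C \<Longrightarrow> Z \<in> Obj C \<Longrightarrow> T \<in> Obj C
      \<Longrightarrow> f \<in> Hom C X Y \<Longrightarrow> h \<in> Hom C Z T \<Longrightarrow> g \<in> Hom D (Fo Y) (Fo Z)
      \<Longrightarrow> P X T (cmp D (Fm h) (cmp D g (Fm f))) = cmp C h (cmp C (P Y Z g) f)"
  shows "natural_section C D Fo Fm P"
  using assms unfolding natural_section_def by blast

context
  fixes C :: "('o1, 'm1) category" and D :: "('o2, 'm2) category"
    and Fo :: "'o1 \<Rightarrow> 'o2" and Fm :: "'m1 \<Rightarrow> 'm2" and P :: "'o1 \<Rightarrow> 'o1 \<Rightarrow> 'm2 \<Rightarrow> 'm1"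
  assumes natural: "natural_section C D Fo Fm P"
begin

lemma natural_section_Hom:
  "A \<in> Obj C \<Longrightarrow> A' \<in> Obj C \<Longrightarrow> u \<in> Hom D (Fo A) (Fo A') \<Longrightarrow> P A A' u \<in> Hom C A A'"
  using natural unfolding natural_section_def by blast

lemma natural_section_inverse:
  "A \<in> Obj C \<Longrightarrow> A' \<in> Obj C \<Longrightarrow> u \<in> Hom D (Fo A) (Fo A') \<Longrightarrow> Fm (P A A' u) = u"
  using natural unfolding natural_section_def by blast

lemma natural_section_natural:
  "X \<in> Obj C \<Longrightarrow> Y \<in> Obj C \<Longrightarrow> Z \<in> Obj C \<Longrightarrow> T \<in> Obj C
    \<Longrightarrow> f \<in> Hom C X Y \<Longrightarrow> h \<in> Hom C Z T \<Longrightarrow> g \<in> Hom D (Fo Y) (Fo Z)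
    \<Longrightarrow> P X T (cmp D (Fm h) (cmp D g (Fm f))) = cmp C h (cmp C (P Y Z g) f)"
  using natural unfolding natural_section_def by blast

end

lemma natural_section_comp:
  assumes G: "is_functor C D Go Gm"
    and PG: "natural_section C D Go Gm PG" and PH: "natural_section D E Ho Hm PH"
  shows "natural_section C E (Ho \<circ> Go) (Hm \<circ> Gm) (\<lambda>A A' u. PG A A' (PH (Go A) (Go A') u))"
proof (rule natural_sectionI)
  fix A A' u assume "A \<in> Obj C" "A' \<in> Obj C" "u \<in> Hom E ((Ho \<circ> Go) A) ((Ho \<circ> Go) A')"
  moreover from this have "PH (Go A) (Go A') u \<in> Hom D (Go A) (Go A')"
    using natural_section_Hom[OF PH] functor_Obj[OF G] by simp
  ultimately show "PG A A' (PH (Go A) (Go A') u) \<in> Hom C A A'"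
    and "(Hm \<circ> Gm) (PG A A' (PH (Go A) (Go A') u)) = u"
    using natural_section_Hom[OF PG] natural_section_inverse[OF PG]
      natural_section_inverse[OF PH] functor_Obj[OF G] by simp_all
next
  fix X Y Z T f h g
  assume objs: "X \<in> Obj C" "Y \<in> Obj C" "Z \<in> Obj C" "T \<in> Obj C"
    and homs: "f \<in> Hom C X Y" "h \<in> Hom C Z T"
    and g: "g \<in> Hom E ((Ho \<circ> Go) Y) ((Ho \<circ> Go) Z)"
  have "PH (Go X) (Go T) (cmp E (Hm (Gm h)) (cmp E g (Hm (Gm f))))
      = cmp D (Gm h) (cmp D (PH (Go Y) (Go Z) g) (Gm f))"
    using natural_section_natural[OF PH] objs homs g functor_Obj[OF G] functor_Hom[OF G] by simp
  moreover have "PH (Go Y) (Go Z) g \<in> Hom D (Go Y) (Go Z)"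
    using natural_section_Hom[OF PH] objs g functor_Obj[OF G] by simp
  ultimately show "PG X T (PH (Go X) (Go T) (cmp E ((Hm \<circ> Gm) h) (cmp E g ((Hm \<circ> Gm) f))))
      = cmp C h (cmp C (PG Y Z (PH (Go Y) (Go Z) g)) f)"
    using natural_section_natural[OF PG] objs homs by simp
qed

lemma natural_section_cancel_faithful:
  assumes D: "is_category D" and G: "is_functor C D Go Gm" and H: "is_functor D E Ho Hm"
    and faithful: "faithful D E Ho Hm"
    and P: "natural_section C E (Ho \<circ> Go) (Hm \<circ> Gm) P"
  shows "natural_section C D Go Gm (\<lambda>A A' u. P A A' (Hm u))"
proof (rule natural_sectionI)
  fix A A' u assume objs: "A \<in> Obj C" "A' \<in> Obj C" and u: "u \<in> Hom D (Go A) (Go A')"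
  have Hu: "Hm u \<in> Hom E ((Ho \<circ> Go) A) ((Ho \<circ> Go) A')"
    using functor_Hom[OF H] functor_Obj[OF G] objs u by simp
  then show PHu: "P A A' (Hm u) \<in> Hom C A A'"
    using natural_section_Hom[OF P] objs by blast
  have "Gm (P A A' (Hm u)) \<in> Hom D (Go A) (Go A')"
    using functor_Hom[OF G] PHu objs by blast
  moreover have "Hm (Gm (P A A' (Hm u))) = Hm u"
    using natural_section_inverse[OF P] objs Hu by simp
  moreover have "inj_on Hm (Hom D (Go A) (Go A'))"
    using faithful objs functor_Obj[OF G] unfolding faithful_def by blast
  ultimately show "Gm (P A A' (Hm u)) = u"
    using u by (meson inj_onD)
next
  fix X Y Z T f h g
  assume objs: "X \<in> Obj C" "Y \<in> Obj C" "Z \<in> Obj C" "T \<in> Obj C"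
    and homs: "f \<in> Hom C X Y" "h \<in> Hom C Z T" and g: "g \<in> Hom D (Go Y) (Go Z)"
  have Gobjs: "Go X \<in> Obj D" "Go Y \<in> Obj D" "Go Z \<in> Obj D" "Go T \<in> Obj D"
    using objs functor_Obj[OF G] by auto
  have Gf: "Gm f \<in> Hom D (Go X) (Go Y)" and Gh: "Gm h \<in> Hom D (Go Z) (Go T)"
    using objs homs functor_Hom[OF G] by auto
  have gGf: "cmp D g (Gm f) \<in> Hom D (Go X) (Go Z)"
    using category_cmp_Hom[OF D Gobjs(1-3) Gf g] .
  have "Hm (cmp D (Gm h) (cmp D g (Gm f))) = cmp E (Hm (Gm h)) (Hm (cmp D g (Gm f)))"
    using functor_cmp[OF H Gobjs(1,3,4) gGf Gh] .
  also have "Hm (cmp D g (Gm f)) = cmp E (Hm g) (Hm (Gm f))"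
    using functor_cmp[OF H Gobjs(1-3) Gf g] .
  finally have H_cmp: "Hm (cmp D (Gm h) (cmp D g (Gm f)))
      = cmp E ((Hm \<circ> Gm) h) (cmp E (Hm g) ((Hm \<circ> Gm) f))" by simp
  have "Hm g \<in> Hom E ((Ho \<circ> Go) Y) ((Ho \<circ> Go) Z)"
    using functor_Hom[OF H] Gobjs g by simp
  then show "P X T (Hm (cmp D (Gm h) (cmp D g (Gm f)))) = cmp C h (cmp C (P Y Z (Hm g)) f)"
    unfolding H_cmp using natural_section_natural[OF P] objs homs by blast
qed

theorem proposition2p3:
  fixes C :: "('o1, 'm1) category" and D :: "('o2, 'm2) category"
    and E :: "('o3, 'm3) category"
    and Go :: "'o1 \<Rightarrow> 'o2" and Gm :: "'m1 \<Rightarrow> 'm2"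
    and Ho :: "'o2 \<Rightarrow> 'o3" and Hm :: "'m2 \<Rightarrow> 'm3"
  assumes "is_category C" and "is_category D" and "is_category E"
    and "is_functor C D Go Gm" and "is_functor D E Ho Hm"
  shows "(naturally_full C D Go Gm \<and> naturally_full D E Ho Hm
            \<longrightarrow> naturally_full C E (Ho \<circ> Go) (Hm \<circ> Gm))
       \<and> (naturally_full C E (Ho \<circ> Go) (Hm \<circ> Gm) \<and> faithful D E Ho Hm
            \<longrightarrow> naturally_full C D Go Gm)"
  using natural_section_comp[OF assms(4)]
    natural_section_cancel_faithful[OF assms(2,4,5)]
  unfolding naturally_full_iff_natural_section by blast

end
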